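(* Let $n\ge 2$ and let $\{A,B\}$ be a partition of $[n]=\{1,\dots,n\}$ into two nonempty sets. For any $n$-qubit pure state of the product form $\ket{\psi}=\ket{\psi_A}\otimes\ket{\psi_B}$, where $\ket{\psi_A}$ is a pure state on the qubits in $A$ and $\ket{\psi_B}$ a pure state on the qubits in $B$, $$\mathcal{C}(\ket{\psi})=\mathcal{C}(\ket{\psi_A})+\mathcal{C}(\ket{\psi_B})-\mathcal{C}(\ket{\psi_A})\,\mathcal{C}(\ket{\psi_B}).$$
   Context: For an $m$-qubit pure state $\ket{\phi}$ with qubits labelled by a set $S$ ($|S|=m$), the concentratable entanglement is $\mathcal{C}(\ket{\phi})=1-\frac{1}{2^{m}}\sum_{\alpha\subseteq S}\mathrm{Tr}[\rho_\alpha^2]$, where $\rho_\alpha$ is the reduced density matrix of $\ket{\phi}\!\bra{\phi}$ on the qubits in $\alpha$, with the convention $\mathrm{Tr}[\rho_\emptyset^2]=1$. *)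

theory Defs
  imports Complex_Main
begin

(* A pure state on a finite set S of qubit labels is given by its amplitudes in the
   computational basis.  A basis vector is identified with the subset x \<subseteq> S of
   qubits that are in state |1>.  Only the values on Pow S matter. *)

definition pure_state :: "nat set \<Rightarrow> (nat set \<Rightarrow> complex) \<Rightarrow> bool" where
  "pure_state S \<psi> \<longleftrightarrow> finite S \<and> (\<Sum>x\<in>Pow S. (cmod (\<psi> x))\<^sup>2) = 1"

definition reduced_dm :: "nat set \<Rightarrow> (nat set \<Rightarrow> complex) \<Rightarrow> nat set \<Rightarrow> nat set \<Rightarrow> nat set \<Rightarrow> complex" where
  "reduced_dm S \<psi> \<alpha> x y = (\<Sum>z\<in>Pow (S - \<alpha>). \<psi> (x \<union> z) * cnj (\<psi> (y \<union> z)))"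

(* Purity Tr[rho_alpha^2]; for alpha = {} this equals the squared norm, i.e. 1 for a pure state *)
definition purity :: "nat set \<Rightarrow> (nat set \<Rightarrow> complex) \<Rightarrow> nat set \<Rightarrow> real" where
  "purity S \<psi> \<alpha> = Re (\<Sum>x\<in>Pow \<alpha>. \<Sum>y\<in>Pow \<alpha>. reduced_dm S \<psi> \<alpha> x y * reduced_dm S \<psi> \<alpha> y x)"

definition conc_ent :: "nat set \<Rightarrow> (nat set \<Rightarrow> complex) \<Rightarrow> real" where
  "conc_ent S \<psi> = 1 - (1 / 2 ^ card S) * (\<Sum>\<alpha>\<in>Pow S. purity S \<psi> \<alpha>)"

definition tensor_state :: "nat set \<Rightarrow> (nat set \<Rightarrow> complex) \<Rightarrow> nat set \<Rightarrow> (nat set \<Rightarrow> complex) \<Rightarrow> nat set \<Rightarrow> complex" where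
  "tensor_state A \<psi>A B \<psi>B x = \<psi>A (x \<inter> A) * \<psi>B (x \<inter> B)"

end

theory Submission
  imports Defs
begin

(* Every reduced density matrix of a product state factorises,
   rho_alpha = rho^A_(alpha \<inter> A) \<otimes> rho^B_(alpha \<inter> B), so every purity is multiplicative,
   Tr[rho_alpha^2] = Tr[(rho^A_(alpha \<inter> A))^2] * Tr[(rho^B_(alpha \<inter> B))^2].
   Splitting each alpha \<subseteq> A \<union> B as (alpha \<inter> A) \<union> (alpha \<inter> B), the sum of all purities
   of the product state is the product of the two sums, which together with
   2^|A \<union> B| = 2^|A| * 2^|B| says 1 - C(psi) = (1 - C(psi_A)) * (1 - C(psi_B)). *)

lemma bij_betw_Un_Pow_times:
  assumes "C \<inter> D = {}"
  shows "bij_betw (\<lambda>(u, v). u \<union> v) (Pow C \<times> Pow D) (Pow (C \<union> D))"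
  by (rule bij_betw_byWitness[where f' = "\<lambda>x. (x \<inter> C, x \<inter> D)"]) (use assms in auto)

lemma sum_Pow_Un_disjoint:
  assumes "finite C" "finite D" "C \<inter> D = {}"
  shows "(\<Sum>x\<in>Pow (C \<union> D). f x) = (\<Sum>u\<in>Pow C. \<Sum>v\<in>Pow D. f (u \<union> v))"
proof -
  have "(\<Sum>x\<in>Pow (C \<union> D). f x) = (\<Sum>(u, v)\<in>Pow C \<times> Pow D. f (u \<union> v))"
    using sum.reindex_bij_betw[OF bij_betw_Un_Pow_times[OF assms(3)], of f]
    by (simp add: case_prod_unfold)
  also have "\<dots> = (\<Sum>u\<in>Pow C. \<Sum>v\<in>Pow D. f (u \<union> v))"
    using assms(1,2) by (simp add: sum.cartesian_product)
  finally show ?thesis .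
qed

definition trace_rdm_sq :: "nat set \<Rightarrow> (nat set \<Rightarrow> complex) \<Rightarrow> nat set \<Rightarrow> complex" where
  "trace_rdm_sq S \<psi> \<alpha> = (\<Sum>x\<in>Pow \<alpha>. \<Sum>y\<in>Pow \<alpha>. reduced_dm S \<psi> \<alpha> x y * reduced_dm S \<psi> \<alpha> y x)"

lemma purity_eq_Re_trace_rdm_sq: "purity S \<psi> \<alpha> = Re (trace_rdm_sq S \<psi> \<alpha>)"
  unfolding purity_def trace_rdm_sq_def ..

lemma reduced_dm_swap: "reduced_dm S \<psi> \<alpha> y x = cnj (reduced_dm S \<psi> \<alpha> x y)"
  unfolding reduced_dm_def by (simp add: mult.commute)

lemma Im_trace_rdm_sq: "Im (trace_rdm_sq S \<psi> \<alpha>) = 0"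
proof -
  have "Im (reduced_dm S \<psi> \<alpha> x y * reduced_dm S \<psi> \<alpha> y x) = 0" for x y
    by (subst reduced_dm_swap[of S \<psi> \<alpha> y x]) (simp add: algebra_simps)
  then show ?thesis
    unfolding trace_rdm_sq_def by (simp add: Im_sum)
qed

context
  fixes A B :: "nat set" and \<psi>A \<psi>B :: "nat set \<Rightarrow> complex"
  assumes finite_A: "finite A" and finite_B: "finite B" and disjoint: "A \<inter> B = {}"
begin

lemma Un_Int_split:
  assumes "u \<subseteq> A" "v \<subseteq> B"
  shows "(u \<union> v) \<inter> A = u" "(u \<union> v) \<inter> B = v"
  using assms disjoint by auto

lemma reduced_dm_tensor_state:
  assumes "\<alpha> \<subseteq> A \<union> B" "x \<subseteq> \<alpha>" "y \<subseteq> \<alpha>"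
  shows "reduced_dm (A \<union> B) (tensor_state A \<psi>A B \<psi>B) \<alpha> x y
     = reduced_dm A \<psi>A (\<alpha> \<inter> A) (x \<inter> A) (y \<inter> A) * reduced_dm B \<psi>B (\<alpha> \<inter> B) (x \<inter> B) (y \<inter> B)"
proof -
  have traced_out: "A \<union> B - \<alpha> = (A - \<alpha> \<inter> A) \<union> (B - \<alpha> \<inter> B)" by auto
  have "reduced_dm (A \<union> B) (tensor_state A \<psi>A B \<psi>B) \<alpha> x y
     = (\<Sum>u\<in>Pow (A - \<alpha> \<inter> A). \<Sum>v\<in>Pow (B - \<alpha> \<inter> B).
          tensor_state A \<psi>A B \<psi>B (x \<union> (u \<union> v)) * cnj (tensor_state A \<psi>A B \<psi>B (y \<union> (u \<union> v))))"
    unfolding reduced_dm_def traced_out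
    using finite_A finite_B disjoint by (subst sum_Pow_Un_disjoint) auto
  also have "\<dots> = (\<Sum>u\<in>Pow (A - \<alpha> \<inter> A). \<Sum>v\<in>Pow (B - \<alpha> \<inter> B).
          (\<psi>A (x \<inter> A \<union> u) * cnj (\<psi>A (y \<inter> A \<union> u))) * (\<psi>B (x \<inter> B \<union> v) * cnj (\<psi>B (y \<inter> B \<union> v))))"
  proof (intro sum.cong refl)
    fix u v assume "u \<in> Pow (A - \<alpha> \<inter> A)" "v \<in> Pow (B - \<alpha> \<inter> B)"
    then have "(x \<union> (u \<union> v)) \<inter> A = x \<inter> A \<union> u" "(x \<union> (u \<union> v)) \<inter> B = x \<inter> B \<union> v"
      "(y \<union> (u \<union> v)) \<inter> A = y \<inter> A \<union> u" "(y \<union> (u \<union> v)) \<inter> B = y \<inter> B \<union> v"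
      using disjoint by auto
    then show "tensor_state A \<psi>A B \<psi>B (x \<union> (u \<union> v)) * cnj (tensor_state A \<psi>A B \<psi>B (y \<union> (u \<union> v)))
      = (\<psi>A (x \<inter> A \<union> u) * cnj (\<psi>A (y \<inter> A \<union> u))) * (\<psi>B (x \<inter> B \<union> v) * cnj (\<psi>B (y \<inter> B \<union> v)))"
      unfolding tensor_state_def by (simp add: algebra_simps)
  qed
  also have "\<dots> = reduced_dm A \<psi>A (\<alpha> \<inter> A) (x \<inter> A) (y \<inter> A) * reduced_dm B \<psi>B (\<alpha> \<inter> B) (x \<inter> B) (y \<inter> B)"
    unfolding reduced_dm_def by (simp add: sum_product)
  finally show ?thesis .
qed

lemma trace_rdm_sq_tensor_state:
  assumes "\<alpha> \<subseteq> A \<union> B"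
  shows "trace_rdm_sq (A \<union> B) (tensor_state A \<psi>A B \<psi>B) \<alpha>
    = trace_rdm_sq A \<psi>A (\<alpha> \<inter> A) * trace_rdm_sq B \<psi>B (\<alpha> \<inter> B)"
proof -
  let ?rA = "reduced_dm A \<psi>A (\<alpha> \<inter> A)" and ?rB = "reduced_dm B \<psi>B (\<alpha> \<inter> B)"
  let ?f = "\<lambda>x y. (?rA (x \<inter> A) (y \<inter> A) * ?rA (y \<inter> A) (x \<inter> A)) *
                  (?rB (x \<inter> B) (y \<inter> B) * ?rB (y \<inter> B) (x \<inter> B))"
  have split_Pow: "(\<Sum>x\<in>Pow \<alpha>. g x) = (\<Sum>u\<in>Pow (\<alpha> \<inter> A). \<Sum>v\<in>Pow (\<alpha> \<inter> B). g (u \<union> v))" for g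
  proof -
    have "\<alpha> = (\<alpha> \<inter> A) \<union> (\<alpha> \<inter> B)" using assms by auto
    then show ?thesis
      using sum_Pow_Un_disjoint[of "\<alpha> \<inter> A" "\<alpha> \<inter> B" g] finite_A finite_B disjoint by auto
  qed
  have "trace_rdm_sq (A \<union> B) (tensor_state A \<psi>A B \<psi>B) \<alpha> = (\<Sum>x\<in>Pow \<alpha>. \<Sum>y\<in>Pow \<alpha>. ?f x y)"
    unfolding trace_rdm_sq_def using assms
    by (intro sum.cong refl) (simp add: reduced_dm_tensor_state algebra_simps)
  also have "\<dots> = (\<Sum>xa\<in>Pow (\<alpha> \<inter> A). \<Sum>xb\<in>Pow (\<alpha> \<inter> B). \<Sum>ya\<in>Pow (\<alpha> \<inter> A). \<Sum>yb\<in>Pow (\<alpha> \<inter> B).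
          ?f (xa \<union> xb) (ya \<union> yb))"
    by (simp only: split_Pow)
  also have "\<dots> = (\<Sum>xa\<in>Pow (\<alpha> \<inter> A). \<Sum>xb\<in>Pow (\<alpha> \<inter> B). \<Sum>ya\<in>Pow (\<alpha> \<inter> A). \<Sum>yb\<in>Pow (\<alpha> \<inter> B).
          (?rA xa ya * ?rA ya xa) * (?rB xb yb * ?rB yb xb))"
    by (intro sum.cong refl) (simp add: Un_Int_split)
  also have "\<dots> = trace_rdm_sq A \<psi>A (\<alpha> \<inter> A) * trace_rdm_sq B \<psi>B (\<alpha> \<inter> B)"
    unfolding trace_rdm_sq_def by (simp add: sum_product)
  finally show ?thesis .
qed

lemma purity_tensor_state:
  assumes "u \<subseteq> A" "v \<subseteq> B"
  shows "purity (A \<union> B) (tensor_state A \<psi>A B \<psi>B) (u \<union> v) = purity A \<psi>A u * purity B \<psi>B v"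
proof -
  have "u \<union> v \<subseteq> A \<union> B" using assms by auto
  then show ?thesis
    unfolding purity_eq_Re_trace_rdm_sq
    using trace_rdm_sq_tensor_state Un_Int_split[OF assms] Im_trace_rdm_sq[of A \<psi>A u] by simp
qed

lemma sum_purity_tensor_state:
  "(\<Sum>\<alpha>\<in>Pow (A \<union> B). purity (A \<union> B) (tensor_state A \<psi>A B \<psi>B) \<alpha>)
   = (\<Sum>\<alpha>\<in>Pow A. purity A \<psi>A \<alpha>) * (\<Sum>\<alpha>\<in>Pow B. purity B \<psi>B \<alpha>)"
  by (simp add: sum_Pow_Un_disjoint[OF finite_A finite_B disjoint] purity_tensor_state sum_product)

lemma conc_ent_tensor_state:
  "1 - conc_ent (A \<union> B) (tensor_state A \<psi>A B \<psi>B) = (1 - conc_ent A \<psi>A) * (1 - conc_ent B \<psi>B)"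
  using card_Un_disjoint[OF finite_A finite_B disjoint]
  by (simp add: conc_ent_def sum_purity_tensor_state power_add)

end

theorem proposition1:
  fixes n :: nat and A B :: "nat set" and \<psi>A \<psi>B :: "nat set \<Rightarrow> complex"
  assumes "n \<ge> 2"
    and "A \<union> B = {1..n}" and "A \<inter> B = {}" and "A \<noteq> {}" and "B \<noteq> {}"
    and "pure_state A \<psi>A" and "pure_state B \<psi>B"
  shows "conc_ent {1..n} (tensor_state A \<psi>A B \<psi>B)
         = conc_ent A \<psi>A + conc_ent B \<psi>B - conc_ent A \<psi>A * conc_ent B \<psi>B"
proof -
  have "finite A" "finite B"
    using assms(6,7) unfolding pure_state_def by auto
  then have "1 - conc_ent {1..n} (tensor_state A \<psi>A B \<psi>B) = (1 - conc_ent A \<psi>A) * (1 - conc_ent B \<psi>B)"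
    using conc_ent_tensor_state assms(2,3) by metis
  then show ?thesis
    by (simp add: algebra_simps)
qed

end
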